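(* Let $M$ be a transversal matroid and $e\in E(M)$. Let $\mathcal A=(A_1,\ldots,A_r)$ be a presentation of $M$ with $r=r(M)$, such that for some $k$, $e\in A_i$ for all $i\le k$ and $e\notin A_j$ for all $j>k$. Let $G$ be a minimal $(e,\mathcal A)$-presenting graph which is a tree, and let $\phi$ be an $(e,\mathcal A)$-presenting map of $G$. Suppose $E(G)=\{\{u_1,v_1\},\{u_2,v_2\},\ldots,\{u_{k-1},v_{k-1}\}\}$. Then $$(A_{\phi(u_1)}\cup A_{\phi(v_1)}-e,\ \ldots,\ A_{\phi(u_{k-1})}\cup A_{\phi(v_{k-1})}-e,\ A_{k+1},A_{k+2},\ldots,A_r)$$ is a presentation of $M/e$.
   Context: A presentation $\mathcal A=(A_1,\ldots,A_r)$ (a sequence of not necessarily distinct subsets of $E$) of a transversal matroid $M=M[\mathcal A]$ means the independent sets of $M$ are exactly the partial transversals of $\mathcal A$, i.e. sets $\{x_1,\ldots,x_m\}$ of distinct elements with distinct indices $k_1,\ldots,k_m\in[r]$ and $x_i\in A_{k_i}$. Write $\mathrm{cl}^*_M$ for the closure operator of the dual matroid $M^*$. A graph $G$ is an $(e,\mathcal A)$-presenting graph if there is a bijection $\phi:V(G)\to\{i\in[r]: e\in A_i\}$ such that for all distinct $v_1,v_2\in V(G)$, the subgraph of $G$ induced by $\{u\in V(G): A_{\phi(u)}\subseteq \mathrm{cl}^*_M(A_{\phi(v_1)}\cup A_{\phi(v_2)})\}$ is connected; $\phi$ is then an $(e,\mathcal A)$-presenting map of $G$. $G$ is a minimal $(e,\mathcal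 A)$-presenting graph if it is $(e,\mathcal A)$-presenting and deleting any single edge gives a graph that is not $(e,\mathcal A)$-presenting. *)

theory Defs
  imports Main
begin

definition mrank :: "('a set \<Rightarrow> bool) \<Rightarrow> 'a set \<Rightarrow> nat" where
  "mrank indep X = Max (card ` {I. I \<subseteq> X \<and> indep I})"

definition mbasis :: "'a set \<Rightarrow> ('a set \<Rightarrow> bool) \<Rightarrow> 'a set \<Rightarrow> bool" where
  "mbasis E indep B \<longleftrightarrow> B \<subseteq> E \<and> indep B \<and> (\<forall>I. I \<subseteq> E \<and> indep I \<and> B \<subseteq> I \<longrightarrow> I = B)"

definition mclosure :: "'a set \<Rightarrow> ('a set \<Rightarrow> bool) \<Rightarrow> 'a set \<Rightarrow> 'a set" where
  "mclosure E indep X = {x \<in> E. mrank indep (insert x X) = mrank indep X}"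

definition dual_indep :: "'a set \<Rightarrow> ('a set \<Rightarrow> bool) \<Rightarrow> 'a set \<Rightarrow> bool" where
  "dual_indep E indep I \<longleftrightarrow> I \<subseteq> E \<and> (\<exists>B. mbasis E indep B \<and> B \<inter> I = {})"

definition dual_closure :: "'a set \<Rightarrow> ('a set \<Rightarrow> bool) \<Rightarrow> 'a set \<Rightarrow> 'a set" where
  "dual_closure E indep X = mclosure E (dual_indep E indep) X"

definition contract_indep :: "'a set \<Rightarrow> ('a set \<Rightarrow> bool) \<Rightarrow> 'a \<Rightarrow> 'a set \<Rightarrow> bool" where
  "contract_indep E indep e I \<longleftrightarrow> I \<subseteq> E - {e} \<and>
     (if indep {e} then indep (insert e I) else indep I)"

text \<open>Partial transversals of the set system As = (As!0, ..., As!(r-1)) (0-indexed).\<close>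
definition partial_transversal :: "'a set \<Rightarrow> 'a set list \<Rightarrow> 'a set \<Rightarrow> bool" where
  "partial_transversal E As X \<longleftrightarrow> X \<subseteq> E \<and>
     (\<exists>f. inj_on f X \<and> (\<forall>x\<in>X. f x < length As \<and> x \<in> As ! f x))"

definition is_presentation :: "'a set \<Rightarrow> ('a set \<Rightarrow> bool) \<Rightarrow> 'a set list \<Rightarrow> bool" where
  "is_presentation E indep As \<longleftrightarrow> (\<forall>A\<in>set As. A \<subseteq> E) \<and>
     (\<forall>X. indep X \<longleftrightarrow> partial_transversal E As X)"

definition simple_graph :: "'v set \<Rightarrow> 'v set set \<Rightarrow> bool" where
  "simple_graph V Eg \<longleftrightarrow> finite V \<and> (\<forall>ed\<in>Eg. \<exists>u v. ed = {u, v} \<and> u \<noteq> v \<and> u \<in> V \<and> v \<in> V)"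

definition induced_connected :: "'v set set \<Rightarrow> 'v set \<Rightarrow> bool" where
  "induced_connected Eg S \<longleftrightarrow>
     (\<forall>x\<in>S. \<forall>y\<in>S. (x, y) \<in> {(a, b). a \<in> S \<and> b \<in> S \<and> {a, b} \<in> Eg}\<^sup>*)"

definition has_cycle :: "'v set \<Rightarrow> 'v set set \<Rightarrow> bool" where
  "has_cycle V Eg \<longleftrightarrow> (\<exists>cs. 3 \<le> length cs \<and> distinct cs \<and> set cs \<subseteq> V \<and>
     (\<forall>i<length cs. {cs ! i, cs ! ((i + 1) mod length cs)} \<in> Eg))"

definition is_tree :: "'v set \<Rightarrow> 'v set set \<Rightarrow> bool" where
  "is_tree V Eg \<longleftrightarrow> simple_graph V Eg \<and> V \<noteq> {} \<and> induced_connected Eg V \<and> \<not> has_cycle V Eg"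

definition presenting_map ::
  "'a set \<Rightarrow> 'a set list \<Rightarrow> 'a \<Rightarrow> 'v set \<Rightarrow> 'v set set \<Rightarrow> ('v \<Rightarrow> nat) \<Rightarrow> bool" where
  "presenting_map E As e V Eg \<phi> \<longleftrightarrow>
     bij_betw \<phi> V {i. i < length As \<and> e \<in> As ! i} \<and>
     (\<forall>v1\<in>V. \<forall>v2\<in>V. v1 \<noteq> v2 \<longrightarrow>
        induced_connected Eg
          {u \<in> V. As ! \<phi> u \<subseteq> dual_closure E (partial_transversal E As) (As ! \<phi> v1 \<union> As ! \<phi> v2)})"

definition presenting_graph :: "'a set \<Rightarrow> 'a set list \<Rightarrow> 'a \<Rightarrow> 'v set \<Rightarrow> 'v set set \<Rightarrow> bool" where
  "presenting_graph E As e V Eg \<longleftrightarrow> simple_graph V Eg \<and> (\<exists>\<phi>. presenting_map E As e V Eg \<phi>)"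

definition minimal_presenting_graph :: "'a set \<Rightarrow> 'a set list \<Rightarrow> 'a \<Rightarrow> 'v set \<Rightarrow> 'v set set \<Rightarrow> bool" where
  "minimal_presenting_graph E As e V Eg \<longleftrightarrow> presenting_graph E As e V Eg \<and>
     (\<forall>ed\<in>Eg. \<not> presenting_graph E As e V (Eg - {ed}))"

end

(*
  Write A_v for the set of the vertex v. A set X avoiding e is independent in M/e iff X + e is
  a partial transversal of A. Given such a matching, let v be the vertex whose set is matched
  to e and root the tree at v: the set of any other vertex u lies, up to e, in the set of the
  edge from u to its parent, and different vertices use different edges. So X is a partial
  transversal of the new presentation.

  Conversely, let X be a partial transversal of the new presentation. First, X is independent
  in M: otherwise X contains a circuit Z of M, and Z violates Hall's condition in A. An element
  of a circuit disjoint from a set Y is not in cl*(Y), so the connected subgraphs provided by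
  the presenting map stay among the vertices whose sets miss Z; these therefore induce a
  subtree, and a tree has at most as many edges leaving a subtree as vertices outside it. Hence
  the new sets meeting Z are no more than the sets A_v meeting Z, and Z would violate Hall's
  condition in the new presentation too. So if X + e is not a partial transversal of A, Hall's
  theorem gives a violating set containing e, and there the k - 1 edge sets cannot make up for
  the k sets containing e.
*)
theory Submission
  imports Defs "HOL-Library.Transitive_Closure_Table"
begin

section \<open>Hall's theorem\<close>

lemma inj_on_fun_upd_extend: "inj_on f (A - {a}) \<Longrightarrow> b \<notin> f ` (A - {a}) \<Longrightarrow> inj_on (f(a := b)) A"
  unfolding inj_on_def by (metis DiffI fun_upd_apply image_eqI singletonD)

lemma Hall_step_critical:
  fixes N :: "'a \<Rightarrow> 'b set"
  assumes IH: "\<And>X' (N' :: 'a \<Rightarrow> 'b set). X' \<subset> X \<Longrightarrow>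
      (\<And>Y. Y \<subseteq> X' \<Longrightarrow> card Y \<le> card (\<Union>(N' ` Y))) \<Longrightarrow> \<exists>f. inj_on f X' \<and> (\<forall>x\<in>X'. f x \<in> N' x)"
    and Hall: "\<And>Y. Y \<subseteq> X \<Longrightarrow> card Y \<le> card (\<Union>(N ` Y))" and fin: "finite X"
    and C: "C \<subseteq> X" "C \<noteq> {}" "C \<noteq> X" "card (\<Union>(N ` C)) = card C"
  shows "\<exists>f. inj_on f X \<and> (\<forall>x\<in>X. f x \<in> N x)"
proof -
  have "C \<subset> X" "X - C \<subset> X"
    using C(1-3) by auto
  have "card Y \<le> card (\<Union>(N ` Y))" if "Y \<subseteq> C" for Y
    using that C(1) by (intro Hall) blast
  then obtain f1 where f1: "inj_on f1 C" "\<forall>x\<in>C. f1 x \<in> N x"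
    using IH[OF \<open>C \<subset> X\<close>] by blast
  define N' where "N' x = N x - \<Union>(N ` C)" for x
  have "card Y \<le> card (\<Union>(N' ` Y))" if Y: "Y \<subseteq> X - C" for Y
  proof -
    have "card Y + card C = card (Y \<union> C)"
      using Y C(1) fin by (intro card_Un_disjoint[symmetric]) (auto intro: finite_subset)
    also have "\<dots> \<le> card (\<Union>(N ` (Y \<union> C)))"
      using Y C(1) by (intro Hall) auto
    also have "\<Union>(N ` (Y \<union> C)) = \<Union>(N' ` Y) \<union> \<Union>(N ` C)"
      unfolding N'_def by blast
    also have "card (\<Union>(N' ` Y) \<union> \<Union>(N ` C)) \<le> card (\<Union>(N' ` Y)) + card C"
      using card_Un_le C(4) by metis
    finally show ?thesis
      by simp
  qed
  then obtain f2 where f2: "inj_on f2 (X - C)" "\<forall>x\<in>X - C. f2 x \<in> N' x"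
    using IH[OF \<open>X - C \<subset> X\<close>] by blast
  have "f1 ` C \<subseteq> \<Union>(N ` C)" "f2 ` (X - C) \<inter> \<Union>(N ` C) = {}"
    using f1(2) f2(2) unfolding N'_def by auto
  then have "inj_on (\<lambda>x. if x \<in> C then f1 x else f2 x) (C \<union> (X - C))"
    by (intro inj_on_disjoint_Un[OF f1(1) f2(1)]) blast
  moreover have "C \<union> (X - C) = X"
    using C(1) by blast
  moreover have "\<forall>x\<in>X. (if x \<in> C then f1 x else f2 x) \<in> N x"
    using f1(2) f2(2) unfolding N'_def by auto
  ultimately show ?thesis
    by (intro exI[of _ "\<lambda>x. if x \<in> C then f1 x else f2 x"]) simp
qed

lemma Hall_step_surplus:
  fixes N :: "'a \<Rightarrow> 'b set"
  assumes IH: "\<And>X' (N' :: 'a \<Rightarrow> 'b set). X' \<subset> X \<Longrightarrow>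
      (\<And>Y. Y \<subseteq> X' \<Longrightarrow> card Y \<le> card (\<Union>(N' ` Y))) \<Longrightarrow> \<exists>f. inj_on f X' \<and> (\<forall>x\<in>X'. f x \<in> N' x)"
    and Hall: "\<And>Y. Y \<subseteq> X \<Longrightarrow> card Y \<le> card (\<Union>(N ` Y))" and x: "x \<in> X"
    and surplus: "\<And>Y. Y \<subseteq> X \<Longrightarrow> Y \<noteq> {} \<Longrightarrow> Y \<noteq> X \<Longrightarrow> card Y < card (\<Union>(N ` Y))"
  shows "\<exists>f. inj_on f X \<and> (\<forall>x\<in>X. f x \<in> N x)"
proof -
  have "card {x} \<le> card (N x)"
    using Hall[of "{x}"] x by simp
  then have "N x \<noteq> {}"
    by auto
  then obtain i where i: "i \<in> N x"
    by blast
  have Hall': "card Y \<le> card (\<Union>((\<lambda>y. N y - {i}) ` Y))" if Y: "Y \<subseteq> X - {x}" for Y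
  proof (cases "Y = {}")
    case False
    then have "card Y < card (\<Union>(N ` Y))"
      using Y x by (intro surplus) auto
    moreover have "\<Union>((\<lambda>y. N y - {i}) ` Y) = \<Union>(N ` Y) - {i}"
      by auto
    then have "card (\<Union>(N ` Y)) - 1 \<le> card (\<Union>((\<lambda>y. N y - {i}) ` Y))"
      by (metis card_Diff_singleton_if diff_le_self order_refl)
    ultimately show ?thesis
      by linarith
  qed simp
  have "X - {x} \<subset> X"
    using x by blast
  then obtain f where f: "inj_on f (X - {x})" "\<forall>y\<in>X - {x}. f y \<in> N y - {i}"
    using IH[of "X - {x}" "\<lambda>y. N y - {i}"] Hall' by blast
  have "inj_on (f(x := i)) X"
    using f by (intro inj_on_fun_upd_extend) auto
  moreover have "\<forall>y\<in>X. (f(x := i)) y \<in> N y"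
    using f(2) i by auto
  ultimately show ?thesis
    by blast
qed

theorem Hall_marriage:
  fixes N :: "'a \<Rightarrow> 'b set"
  assumes "finite X" and "\<And>Y. Y \<subseteq> X \<Longrightarrow> card Y \<le> card (\<Union>(N ` Y))"
  shows "\<exists>f. inj_on f X \<and> (\<forall>x\<in>X. f x \<in> N x)"
  using assms
proof (induction X arbitrary: N rule: finite_psubset_induct)
  case (psubset X)
  show ?case
  proof (cases "X = {}")
    case False
    show ?thesis
    proof (cases "\<exists>C. C \<subseteq> X \<and> C \<noteq> {} \<and> C \<noteq> X \<and> card (\<Union>(N ` C)) = card C")
      case True
      then obtain C where "C \<subseteq> X" "C \<noteq> {}" "C \<noteq> X" "card (\<Union>(N ` C)) = card C"
        by blast
      then show ?thesis
        using Hall_step_critical[OF psubset.IH psubset.prems \<open>finite X\<close>] by blast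
    next
      case no_critical: False
      have surplus: "card Y < card (\<Union>(N ` Y))" if "Y \<subseteq> X" "Y \<noteq> {}" "Y \<noteq> X" for Y
      proof -
        have "card (\<Union>(N ` Y)) \<noteq> card Y"
          using no_critical that by metis
        then show ?thesis
          using psubset.prems[OF that(1)] by linarith
      qed
      obtain x where "x \<in> X"
        using False by blast
      then show ?thesis
        using Hall_step_surplus[OF psubset.IH psubset.prems _ surplus] by blast
    qed
  qed simp
qed

section \<open>Matroids\<close>

lemma card_le_mrank:
  assumes "finite X" "J \<subseteq> X" "indep J"
  shows "card J \<le> mrank indep X"
proof -
  have "card J \<in> card ` {J. J \<subseteq> X \<and> indep J}"
    using assms by blast
  then show ?thesis
    unfolding mrank_def using assms(1) by (simp add: finite_Collect_conjI)
qed

lemma mrank_attained: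
  assumes "finite X" "indep {}"
  obtains J where "J \<subseteq> X" "indep J" "card J = mrank indep X"
proof -
  have "finite (card ` {J. J \<subseteq> X \<and> indep J})" "{} \<in> {J. J \<subseteq> X \<and> indep J}"
    using assms by (simp_all add: finite_Collect_conjI)
  then have "mrank indep X \<in> card ` {J. J \<subseteq> X \<and> indep J}"
    unfolding mrank_def by (intro Max_in) auto
  then show ?thesis
    using that by auto
qed

lemma subset_dual_closure: "X \<subseteq> E \<Longrightarrow> X \<subseteq> dual_closure E indep X"
  unfolding dual_closure_def mclosure_def by (auto simp: insert_absorb)

definition circuit :: "'a set \<Rightarrow> ('a set \<Rightarrow> bool) \<Rightarrow> 'a set \<Rightarrow> bool" where
  "circuit E indep Z \<longleftrightarrow> Z \<subseteq> E \<and> \<not> indep Z \<and> (\<forall>Z'. Z' \<subset> Z \<longrightarrow> indep Z')"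

locale matroid =
  fixes E :: "'a set" and indep :: "'a set \<Rightarrow> bool"
  assumes finite_ground: "finite E"
    and indep_subset_ground: "indep X \<Longrightarrow> X \<subseteq> E"
    and indep_empty: "indep {}"
    and indep_subset: "indep X \<Longrightarrow> Y \<subseteq> X \<Longrightarrow> indep Y"
    and indep_augment: "indep I \<Longrightarrow> indep J \<Longrightarrow> card I < card J \<Longrightarrow> \<exists>x\<in>J - I. indep (insert x I)"
begin

lemma indep_finite: "indep X \<Longrightarrow> finite X"
  using finite_ground indep_subset_ground finite_subset by blast

lemma basisI: "indep B \<Longrightarrow> (\<And>J. indep J \<Longrightarrow> B \<subseteq> J \<Longrightarrow> J = B) \<Longrightarrow> mbasis E indep B"
  unfolding mbasis_def using indep_subset_ground by simp

lemma basis_indep: "mbasis E indep B \<Longrightarrow> indep B"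
  unfolding mbasis_def by simp

lemma basis_maximal: "mbasis E indep B \<Longrightarrow> indep J \<Longrightarrow> B \<subseteq> J \<Longrightarrow> J = B"
  unfolding mbasis_def using indep_subset_ground by simp

lemma indep_extends_to_basis:
  assumes "indep I"
  obtains B where "mbasis E indep B" "I \<subseteq> B"
proof -
  define S where "S = {J. indep J \<and> I \<subseteq> J}"
  have "S \<subseteq> Pow E"
    unfolding S_def using indep_subset_ground by blast
  then have "finite S"
    by (rule finite_subset) (simp add: finite_ground)
  moreover have "I \<in> S"
    unfolding S_def using assms by simp
  ultimately obtain B where B: "B \<in> S" and B_max: "\<forall>J\<in>S. B \<subseteq> J \<longrightarrow> J = B"
    using finite_has_maximal2[of S I] by auto
  have "mbasis E indep B"
    using B B_max unfolding S_def by (intro basisI) auto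
  then show ?thesis
    using that B unfolding S_def by blast
qed

lemma card_le_basis:
  assumes B: "mbasis E indep B" and I: "indep I"
  shows "card I \<le> card B"
proof (rule ccontr)
  assume "\<not> card I \<le> card B"
  then obtain x where "x \<in> I - B" "indep (insert x B)"
    using indep_augment[OF basis_indep[OF B] I] by auto
  then show False
    using basis_maximal[OF B] by blast
qed

lemma basis_of_card_ge_basis:
  assumes B: "mbasis E indep B" and I: "indep I" "card B \<le> card I"
  shows "mbasis E indep I"
proof (rule basisI[OF I(1)])
  fix J assume J: "indep J" "I \<subseteq> J"
  then have "card J \<le> card I"
    using card_le_basis[OF B] I(2) by (meson order_trans)
  then show "J = I"
    using J indep_finite card_seteq by blast
qed

lemma dual_indep_empty: "dual_indep E indep {}"
  using indep_extends_to_basis[OF indep_empty] unfolding dual_indep_def by blast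

lemma dependent_contains_circuit:
  assumes "X \<subseteq> E" "\<not> indep X"
  obtains Z where "Z \<subseteq> X" "circuit E indep Z"
proof -
  define S where "S = {Z. Z \<subseteq> X \<and> \<not> indep Z}"
  have "finite S"
    unfolding S_def using finite_subset[OF assms(1) finite_ground] by (simp add: finite_Collect_conjI)
  moreover have "X \<in> S"
    unfolding S_def using assms(2) by simp
  ultimately obtain Z where Z: "Z \<in> S" and Z_min: "\<forall>Z'\<in>S. Z' \<subseteq> Z \<longrightarrow> Z' = Z"
    using finite_has_minimal2[of S X] by auto
  have "indep Z'" if "Z' \<subset> Z" for Z'
    using that Z Z_min unfolding S_def by auto
  then have "circuit E indep Z"
    using Z assms(1) unfolding S_def circuit_def by auto
  then show ?thesis
    using that Z unfolding S_def by blast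
qed

lemma basis_avoiding_circuit_element:
  assumes B: "mbasis E indep B" and Z: "circuit E indep Z" and z: "z \<in> Z"
  obtains B' where "mbasis E indep B'" "B' \<subseteq> Z \<union> B - {z}"
proof -
  define S where "S = {P. Z - {z} \<subseteq> P \<and> P \<subseteq> Z \<union> B - {z} \<and> indep P}"
  have "S \<subseteq> Pow E"
    unfolding S_def using indep_subset_ground by blast
  then have "finite S"
    by (rule finite_subset) (simp add: finite_ground)
  moreover have "Z - {z} \<in> S"
    using Z z unfolding S_def circuit_def by auto
  ultimately obtain P where P: "P \<in> S" and P_max: "\<forall>P'\<in>S. P \<subseteq> P' \<longrightarrow> P' = P"
    using finite_has_maximal2[of S "Z - {z}"] by auto
  have "card B \<le> card P"
  proof (rule ccontr)
    assume "\<not> card B \<le> card P"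
    then obtain y where y: "y \<in> B - P" "indep (insert y P)"
      using P indep_augment[OF _ basis_indep[OF B], of P] unfolding S_def by auto
    show False
    proof (cases "y = z")
      case True
      then have "Z \<subseteq> insert y P"
        using P unfolding S_def by blast
      then show False
        using Z y(2) indep_subset unfolding circuit_def by blast
    next
      case False
      then have "insert y P \<in> S"
        using P y unfolding S_def by blast
      then show False
        using P_max y(1) by blast
    qed
  qed
  then have "mbasis E indep P"
    using basis_of_card_ge_basis[OF B] P unfolding S_def by blast
  then show ?thesis
    using that P unfolding S_def by blast
qed

lemma circuit_element_notin_dual_closure:
  assumes Z: "circuit E indep Z" and z: "z \<in> Z" and X: "X \<subseteq> E" "Z \<inter> X = {}"
  shows "z \<notin> dual_closure E indep X"
proof
  assume "z \<in> dual_closure E indep X"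
  then have rank_eq: "mrank (dual_indep E indep) (insert z X) = mrank (dual_indep E indep) X"
    unfolding dual_closure_def mclosure_def by simp
  have fin: "finite X"
    using X(1) finite_ground finite_subset by blast
  obtain J where J: "J \<subseteq> X" "dual_indep E indep J" "card J = mrank (dual_indep E indep) X"
    using mrank_attained[of X "dual_indep E indep"] fin dual_indep_empty by blast
  obtain B where "mbasis E indep B" "B \<inter> J = {}"
    using J(2) unfolding dual_indep_def by blast
  moreover obtain B' where "mbasis E indep B'" "B' \<subseteq> Z \<union> B - {z}"
    using basis_avoiding_circuit_element[OF \<open>mbasis E indep B\<close> Z z] .
  moreover have "Z \<inter> J = {}" "insert z J \<subseteq> E"
    using J(1) X Z z unfolding circuit_def by auto
  ultimately have "dual_indep E indep (insert z J)"
    unfolding dual_indep_def by blast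
  then have "card (insert z J) \<le> mrank (dual_indep E indep) (insert z X)"
    using fin J(1) by (intro card_le_mrank) auto
  moreover have "z \<notin> J"
    using J(1) X(2) z by blast
  then have "card (insert z J) = Suc (card J)"
    using finite_subset[OF J(1) fin] by simp
  ultimately show False
    using rank_eq J(3) by linarith
qed

end

section \<open>Transversal matroids\<close>

definition nbhd :: "'a set list \<Rightarrow> 'a set \<Rightarrow> nat set" where
  "nbhd As Z = {i. i < length As \<and> As ! i \<inter> Z \<noteq> {}}"

lemma finite_nbhd [simp]: "finite (nbhd As Z)"
  unfolding nbhd_def by simp

lemma nbhd_mono: "Y \<subseteq> Z \<Longrightarrow> nbhd As Y \<subseteq> nbhd As Z"
  unfolding nbhd_def by auto

lemma nbhd_Un: "nbhd As (Y \<union> Z) = nbhd As Y \<union> nbhd As Z"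
  unfolding nbhd_def by auto

lemma nbhd_Int: "nbhd As (Y \<inter> Z) \<subseteq> nbhd As Y \<inter> nbhd As Z"
  unfolding nbhd_def by auto

lemma card_nbhd_le_length: "card (nbhd As Z) \<le> length As"
  unfolding nbhd_def by (rule card_mono[of "{..<length As}", simplified]) auto

lemma nbhd_append: "nbhd (As @ Bs) Z = nbhd As Z \<union> (+) (length As) ` nbhd Bs Z"
proof (intro set_eqI iffI)
  fix i assume i: "i \<in> nbhd (As @ Bs) Z"
  show "i \<in> nbhd As Z \<union> (+) (length As) ` nbhd Bs Z"
  proof (cases "i < length As")
    case False
    then have "i - length As \<in> nbhd Bs Z"
      using i unfolding nbhd_def by (auto simp: nth_append)
    then show ?thesis
      using False by (metis UnI2 image_eqI le_add_diff_inverse not_less)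
  qed (use i in \<open>auto simp: nbhd_def nth_append\<close>)
qed (auto simp: nbhd_def nth_append)

lemma card_nbhd_append: "card (nbhd (As @ Bs) Z) = card (nbhd As Z) + card (nbhd Bs Z)"
proof -
  have "nbhd As Z \<inter> (+) (length As) ` nbhd Bs Z = {}"
    unfolding nbhd_def by auto
  then show ?thesis
    unfolding nbhd_append by (simp add: card_Un_disjoint card_image nbhd_def)
qed

lemma partial_transversal_finite: "partial_transversal E As X \<Longrightarrow> finite X"
  unfolding partial_transversal_def by (meson finite_lessThan inj_on_finite image_subsetI lessThan_iff)

lemma partial_transversal_subset:
  "partial_transversal E As X \<Longrightarrow> Y \<subseteq> X \<Longrightarrow> partial_transversal E As Y"
  unfolding partial_transversal_def by (meson inj_on_subset order_trans subsetD)

lemma card_le_card_nbhd: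
  assumes "partial_transversal E As X" "Y \<subseteq> X"
  shows "card Y \<le> card (nbhd As Y)"
proof -
  obtain f where f: "inj_on f Y" "\<forall>x\<in>Y. f x < length As \<and> x \<in> As ! f x"
    using partial_transversal_subset[OF assms] unfolding partial_transversal_def by blast
  then have "f ` Y \<subseteq> nbhd As Y"
    unfolding nbhd_def by auto
  then show ?thesis
    using f(1) by (intro card_inj_on_le) auto
qed

lemma partial_transversal_iff_Hall:
  assumes "finite X"
  shows "partial_transversal E As X \<longleftrightarrow> X \<subseteq> E \<and> (\<forall>Y\<subseteq>X. card Y \<le> card (nbhd As Y))"
proof
  assume "X \<subseteq> E \<and> (\<forall>Y\<subseteq>X. card Y \<le> card (nbhd As Y))"
  moreover have "nbhd As Y = \<Union>((\<lambda>x. {i. i < length As \<and> x \<in> As ! i}) ` Y)" for Y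
    unfolding nbhd_def by auto
  ultimately obtain f where "inj_on f X" "\<forall>x\<in>X. f x \<in> {i. i < length As \<and> x \<in> As ! i}"
    using Hall_marriage[OF assms, of "\<lambda>x. {i. i < length As \<and> x \<in> As ! i}"] by auto
  then show "partial_transversal E As X"
    using \<open>X \<subseteq> E \<and> _\<close> unfolding partial_transversal_def by auto
next
  assume X: "partial_transversal E As X"
  then have "X \<subseteq> E"
    unfolding partial_transversal_def by blast
  then show "X \<subseteq> E \<and> (\<forall>Y\<subseteq>X. card Y \<le> card (nbhd As Y))"
    using card_le_card_nbhd[OF X] by blast
qed

lemma blocked_element_nbhd:
  assumes I: "partial_transversal E As I" and x: "x \<in> E"
    and blocked: "\<not> partial_transversal E As (insert x I)"
  obtains Y where "Y \<subseteq> I" "card (nbhd As Y) = card Y" "nbhd As {x} \<subseteq> nbhd As Y"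
proof -
  have fin: "finite (insert x I)"
    using partial_transversal_finite[OF I] by simp
  have "insert x I \<subseteq> E"
    using I x unfolding partial_transversal_def by blast
  then obtain Z where Z: "Z \<subseteq> insert x I" "card (nbhd As Z) < card Z"
    using blocked partial_transversal_iff_Hall[OF fin] by (meson not_le)
  have "\<not> Z \<subseteq> I"
    using Z(2) card_le_card_nbhd[OF I] by (meson not_le)
  then have xZ: "x \<in> Z"
    using Z(1) by blast
  define Y where "Y = Z - {x}"
  have "card Y \<le> card (nbhd As Y)"
    using Z(1) card_le_card_nbhd[OF I] unfolding Y_def by blast
  moreover have sub: "nbhd As Y \<subseteq> nbhd As Z"
    unfolding Y_def by (rule nbhd_mono) blast
  moreover have "card Y = card Z - 1" "card Z > 0"
    using xZ finite_subset[OF Z(1) fin] unfolding Y_def by (auto simp: card_gt_0_iff)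
  ultimately have "card (nbhd As Y) = card Y" "nbhd As Y = nbhd As Z"
    using Z(2) card_mono[OF finite_nbhd sub] card_seteq[OF finite_nbhd sub] by linarith+
  moreover have "nbhd As {x} \<subseteq> nbhd As Z"
    using xZ by (intro nbhd_mono) blast
  ultimately show ?thesis
    using that Z(1) unfolding Y_def by blast
qed

(* Call Y tight if card (nbhd As Y) = card Y. Inside a partial transversal tight sets are
   closed under union, since card of nbhd is submodular. *)
lemma tight_sets_Un:
  assumes I: "partial_transversal E As I" and "P \<subseteq> I" "Q \<subseteq> I"
    and P: "card (nbhd As P) = card P" and Q: "card (nbhd As Q) = card Q"
  shows "card (nbhd As (P \<union> Q)) = card (P \<union> Q)"
proof -
  have fin: "finite P" "finite Q"
    using assms partial_transversal_finite finite_subset by blast+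
  have "card (nbhd As (P \<union> Q)) + card (nbhd As P \<inter> nbhd As Q) = card (nbhd As P) + card (nbhd As Q)"
    using card_Un_Int[of "nbhd As P" "nbhd As Q"] unfolding nbhd_Un by simp
  moreover have "card (nbhd As (P \<inter> Q)) \<le> card (nbhd As P \<inter> nbhd As Q)"
    by (rule card_mono) (simp, rule nbhd_Int)
  moreover have "card (P \<inter> Q) \<le> card (nbhd As (P \<inter> Q))" "card (P \<union> Q) \<le> card (nbhd As (P \<union> Q))"
    using assms by (auto intro: card_le_card_nbhd[OF I])
  moreover have "card (P \<union> Q) + card (P \<inter> Q) = card P + card Q"
    using card_Un_Int[OF fin] by simp
  ultimately show ?thesis
    using P Q by linarith
qed

lemma tight_set_absorbing_blocked:
  assumes I: "partial_transversal E As I"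
    and blocked: "B \<subseteq> E" "\<forall>x\<in>B. \<not> partial_transversal E As (insert x I)"
  obtains Q where "Q \<subseteq> I" "card (nbhd As Q) = card Q" "\<forall>x\<in>B. nbhd As {x} \<subseteq> nbhd As Q"
proof -
  define S where "S = {P. P \<subseteq> I \<and> card (nbhd As P) = card P}"
  have "finite S"
    unfolding S_def using partial_transversal_finite[OF I] by (simp add: finite_Collect_conjI)
  moreover have "{} \<in> S"
    unfolding S_def nbhd_def by simp
  ultimately obtain Q where Q: "Q \<in> S" and Q_max: "\<forall>P\<in>S. Q \<subseteq> P \<longrightarrow> P = Q"
    using finite_has_maximal2[of S "{}"] by auto
  have Q_sub: "Q \<subseteq> I" and Q_tight: "card (nbhd As Q) = card Q"
    using Q unfolding S_def by auto
  have "nbhd As {x} \<subseteq> nbhd As Q" if x: "x \<in> B" for x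
  proof -
    obtain Y where Y: "Y \<subseteq> I" "card (nbhd As Y) = card Y" "nbhd As {x} \<subseteq> nbhd As Y"
      using blocked_element_nbhd[OF I] blocked x by blast
    then have "Q \<union> Y \<in> S"
      unfolding S_def using tight_sets_Un[OF I Q_sub Y(1) Q_tight Y(2)] Q_sub by blast
    then have "Y \<subseteq> Q"
      using Q_max by blast
    then show ?thesis
      using Y(3) nbhd_mono by blast
  qed
  then show ?thesis
    using that Q_sub Q_tight by blast
qed

(* Every element of T - I meets only sets already used up by the tight set Q, so T fits into
   card Q + card (I - Q) = card I sets. *)
lemma partial_transversal_augment:
  assumes I: "partial_transversal E As I" and T: "partial_transversal E As T"
    and less: "card I < card T"
  shows "\<exists>x\<in>T - I. partial_transversal E As (insert x I)"
proof (rule ccontr)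
  assume "\<not> ?thesis"
  moreover have "T - I \<subseteq> E"
    using T unfolding partial_transversal_def by blast
  ultimately obtain Q where Q_sub: "Q \<subseteq> I" and Q_tight: "card (nbhd As Q) = card Q"
    and Q_absorbs: "\<forall>x\<in>T - I. nbhd As {x} \<subseteq> nbhd As Q"
    using tight_set_absorbing_blocked[OF I, of "T - I"] by blast
  have finI: "finite I" "finite T"
    using I T partial_transversal_finite by blast+
  have "nbhd As ((T \<inter> Q) \<union> (T - I)) \<subseteq> nbhd As Q"
    using Q_absorbs nbhd_mono[of "T \<inter> Q" Q] unfolding nbhd_Un by (auto simp: nbhd_def)
  then have "card (nbhd As ((T \<inter> Q) \<union> (T - I))) \<le> card Q"
    using Q_tight card_mono[OF finite_nbhd] by metis
  then have "card ((T \<inter> Q) \<union> (T - I)) \<le> card Q"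
    using card_le_card_nbhd[OF T, of "(T \<inter> Q) \<union> (T - I)"] by simp
  moreover have "T \<subseteq> ((T \<inter> Q) \<union> (T - I)) \<union> (I - Q)"
    using Q_sub by blast
  then have "card T \<le> card (((T \<inter> Q) \<union> (T - I)) \<union> (I - Q))"
    using finI by (intro card_mono) auto
  moreover have "card (((T \<inter> Q) \<union> (T - I)) \<union> (I - Q)) \<le> card ((T \<inter> Q) \<union> (T - I)) + card (I - Q)"
    by (rule card_Un_le)
  moreover have "card (I - Q) = card I - card Q" "card Q \<le> card I"
    using Q_sub finI(1) by (auto simp: card_Diff_subset card_mono finite_subset)
  ultimately show False
    using less by linarith
qed

lemma matroid_partial_transversal:
  assumes "finite E"
  shows "matroid E (partial_transversal E As)"
proof
  show "partial_transversal E As X \<Longrightarrow> X \<subseteq> E" for X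
    unfolding partial_transversal_def by blast
  show "partial_transversal E As {}"
    unfolding partial_transversal_def by simp
qed (use assms partial_transversal_subset partial_transversal_augment in blast)+

lemma circuit_nbhd_deficient:
  assumes "finite E" and Z: "circuit E (partial_transversal E As) Z"
  shows "card (nbhd As Z) < card Z"
proof -
  have "Z \<subseteq> E" "\<not> partial_transversal E As Z"
    using Z unfolding circuit_def by auto
  moreover have fin: "finite Z"
    using \<open>Z \<subseteq> E\<close> assms(1) finite_subset by blast
  ultimately obtain Y where Y: "Y \<subseteq> Z" "card (nbhd As Y) < card Y"
    using partial_transversal_iff_Hall[OF fin] by (meson not_le)
  have "Y = Z"
  proof (rule ccontr)
    assume "Y \<noteq> Z"
    then have "partial_transversal E As Y"
      using Y(1) Z unfolding circuit_def by blast
    then show False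
      using Y(2) card_le_card_nbhd[of E As Y Y] by simp
  qed
  then show ?thesis
    using Y(2) by simp
qed

section \<open>Trees\<close>

lemma simple_graph_edgeE:
  assumes "simple_graph V Eg" "ed \<in> Eg"
  obtains u v where "ed = {u, v}" "u \<noteq> v" "u \<in> V" "v \<in> V"
  using assms unfolding simple_graph_def by blast

lemma simple_graph_finite_edges:
  assumes "simple_graph V Eg"
  shows "finite Eg"
proof -
  have "Eg \<subseteq> Pow V"
    using simple_graph_edgeE[OF assms] by blast
  then show ?thesis
    by (rule finite_subset) (use assms in \<open>simp add: simple_graph_def\<close>)
qed

lemma simple_graph_edges_not_within_singleton:
  assumes "simple_graph V Eg"
  shows "{ed\<in>Eg. \<not> ed \<subseteq> {v}} = Eg"
proof -
  have "\<not> ed \<subseteq> {v}" if "ed \<in> Eg" for ed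
    by (rule simple_graph_edgeE[OF assms that]) auto
  then show ?thesis
    by blast
qed

definition induced_edge_rel :: "'v set set \<Rightarrow> 'v set \<Rightarrow> ('v \<times> 'v) set" where
  "induced_edge_rel Eg S = {(a, b). a \<in> S \<and> b \<in> S \<and> {a, b} \<in> Eg}"

lemma induced_connected_iff:
  "induced_connected Eg S \<longleftrightarrow> (\<forall>x\<in>S. \<forall>y\<in>S. (x, y) \<in> (induced_edge_rel Eg S)\<^sup>*)"
  unfolding induced_connected_def induced_edge_rel_def by simp

lemma induced_edge_rel_rtrancl_mono:
  "S \<subseteq> S' \<Longrightarrow> (induced_edge_rel Eg S)\<^sup>* \<subseteq> (induced_edge_rel Eg S')\<^sup>*"
  unfolding induced_edge_rel_def by (rule rtrancl_mono) auto

lemma induced_connected_insert: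
  assumes R: "induced_connected Eg R" and r: "r \<in> R" and wr: "{w, r} \<in> Eg"
  shows "induced_connected Eg (insert w R)"
  unfolding induced_connected_iff
proof (intro ballI)
  let ?rel = "induced_edge_rel Eg (insert w R)"
  have R_conn: "(a, b) \<in> ?rel\<^sup>*" if "a \<in> R" "b \<in> R" for a b
    using R that induced_edge_rel_rtrancl_mono[of R "insert w R" Eg]
    unfolding induced_connected_iff by blast
  have "(w, r) \<in> ?rel" "(r, w) \<in> ?rel"
    using r wr unfolding induced_edge_rel_def by (auto simp: insert_commute)
  then have "(w, a) \<in> ?rel\<^sup>*" "(a, w) \<in> ?rel\<^sup>*" if "a \<in> R" for a
    using R_conn[OF r that] R_conn[OF that r] by (meson converse_rtrancl_into_rtrancl rtrancl_into_rtrancl)+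
  then show "(x, y) \<in> ?rel\<^sup>*" if "x \<in> insert w R" "y \<in> insert w R" for x y
    using that R_conn by auto
qed

lemma connected_crossing_edge:
  assumes V: "induced_connected Eg V" and R: "R \<subseteq> V" "r0 \<in> R" and w0: "w0 \<in> V - R"
  obtains w r where "w \<in> V - R" "r \<in> R" "{w, r} \<in> Eg"
proof -
  have "(r0, w0) \<in> (induced_edge_rel Eg V)\<^sup>*"
    using V R w0 unfolding induced_connected_iff by blast
  then have "r0 \<in> R \<longrightarrow> (\<exists>w r. w \<in> V - R \<and> r \<in> R \<and> {w, r} \<in> Eg)"
  proof (induction rule: converse_rtrancl_induct)
    case (step a b)
    then have "b \<in> V" "{b, a} \<in> Eg"
      unfolding induced_edge_rel_def by (auto simp: insert_commute)
    then show ?case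
      using step(3) by blast
  qed (use w0 in blast)
  then show ?thesis
    using that R(2) by blast
qed

lemma connected_grow_induct [consumes 4, case_names complete grow]:
  assumes "finite V" "induced_connected Eg V" "R \<subseteq> V" "R \<noteq> {}"
    and complete: "P V"
    and grow: "\<And>R w r. R \<subseteq> V \<Longrightarrow> w \<in> V - R \<Longrightarrow> r \<in> R \<Longrightarrow> {w, r} \<in> Eg \<Longrightarrow> P (insert w R) \<Longrightarrow> P R"
  shows "P R"
  using assms(3,4)
proof (induction "card (V - R)" arbitrary: R rule: less_induct)
  case less
  show ?case
  proof (cases "V - R = {}")
    case True
    then show ?thesis
      using less.prems(1) complete by (metis Diff_eq_empty_iff subset_antisym)
  next
    case False
    then obtain w r where wr: "w \<in> V - R" "r \<in> R" "{w, r} \<in> Eg"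
      using connected_crossing_edge[OF assms(2) less.prems(1)] less.prems(2) by (metis ex_in_conv)
    have "card (V - insert w R) < card (V - R)"
      using card_Diff1_less[of "V - R" w] wr(1) assms(1) by (metis Diff_insert finite_Diff)
    then have "P (insert w R)"
      using less.hyps less.prems(1) wr(1) by blast
    then show ?thesis
      by (rule grow[OF less.prems(1) wr])
  qed
qed

lemma path_with_apex_has_cycle:
  assumes path: "rtrancl_path (\<lambda>a b. {a, b} \<in> Eg) r1 ys r2" and ys: "ys \<noteq> []"
    and distinct: "distinct (w # r1 # ys)" and V: "set (w # r1 # ys) \<subseteq> V"
    and e1: "{w, r1} \<in> Eg" and e2: "{w, r2} \<in> Eg"
  shows "has_cycle V Eg"
  unfolding has_cycle_def
proof (intro exI conjI allI impI)
  let ?cs = "w # r1 # ys"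
  show "3 \<le> length ?cs"
    using ys by (cases ys) auto
  show "distinct ?cs" "set ?cs \<subseteq> V"
    by fact+
  fix i assume i: "i < length ?cs"
  show "{?cs ! i, ?cs ! ((i + 1) mod length ?cs)} \<in> Eg"
  proof (cases i)
    case 0
    then show ?thesis
      using e1 ys by simp
  next
    case (Suc j)
    show ?thesis
    proof (cases "j < length ys")
      case True
      then show ?thesis
        using rtrancl_path_nth[OF path True] Suc by simp
    next
      case False
      then have "j = length ys"
        using i Suc by simp
      then have "?cs ! i = r2" "(i + 1) mod length ?cs = 0"
        using rtrancl_path_last[OF path ys] ys Suc by (simp_all add: last_conv_nth)
      then show ?thesis
        using e2 by (simp add: insert_commute)
    qed
  qed
qed

lemma acyclic_unique_neighbour:
  assumes acyclic: "\<not> has_cycle V Eg" and R: "R \<subseteq> V" "induced_connected Eg R"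
    and w: "w \<in> V - R" and r: "r1 \<in> R" "r2 \<in> R" "{w, r1} \<in> Eg" "{w, r2} \<in> Eg"
  shows "r1 = r2"
proof (rule ccontr)
  assume "r1 \<noteq> r2"
  let ?adj = "\<lambda>a b. (a, b) \<in> induced_edge_rel Eg R"
  have "(r1, r2) \<in> (induced_edge_rel Eg R)\<^sup>*"
    using R(2) r(1,2) unfolding induced_connected_iff by blast
  then have "?adj\<^sup>*\<^sup>* r1 r2"
    unfolding rtranclp_rtrancl_eq by simp
  then obtain ys where "rtrancl_path ?adj r1 ys r2"
    by (auto simp: rtranclp_eq_rtrancl_path)
  then obtain ys where path: "rtrancl_path ?adj r1 ys r2" and dist: "distinct (r1 # ys)"
    by (rule rtrancl_path_distinct)
  have ys: "ys \<noteq> []"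
    using path \<open>r1 \<noteq> r2\<close> by (auto elim: rtrancl_path.cases)
  have "set ys \<subseteq> R"
    using rtrancl_path_Range[OF path] unfolding induced_edge_rel_def by auto
  then have "distinct (w # r1 # ys)" "set (w # r1 # ys) \<subseteq> V"
    using dist w r(1) R(1) by auto
  moreover have "rtrancl_path (\<lambda>a b. {a, b} \<in> Eg) r1 ys r2"
    using path by (rule rtrancl_path_mono) (simp add: induced_edge_rel_def)
  ultimately show False
    using path_with_apex_has_cycle[OF _ ys _ _ r(3,4)] acyclic by blast
qed

lemma edges_not_within_insert:
  assumes graph: "simple_graph V Eg" and acyclic: "\<not> has_cycle V Eg"
    and R: "R \<subseteq> V" "induced_connected Eg R"
    and wr: "w \<in> V - R" "r \<in> R" "{w, r} \<in> Eg"
  shows "{ed\<in>Eg. \<not> ed \<subseteq> R} \<subseteq> insert {w, r} {ed\<in>Eg. \<not> ed \<subseteq> insert w R}"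
proof
  fix ed assume ed: "ed \<in> {ed\<in>Eg. \<not> ed \<subseteq> R}"
  show "ed \<in> insert {w, r} {ed\<in>Eg. \<not> ed \<subseteq> insert w R}"
  proof (cases "ed \<subseteq> insert w R")
    case True
    obtain u v where "ed = {u, v}" "u \<noteq> v"
      using ed simple_graph_edgeE[OF graph] by blast
    moreover have "w \<in> ed"
      using True ed by blast
    ultimately obtain c where c: "ed = {w, c}" "c \<noteq> w"
      by (cases "w = u") (auto simp: insert_commute)
    moreover have "c \<in> R"
      using c True by blast
    moreover have "{w, c} \<in> Eg"
      using ed c(1) by simp
    ultimately have "c = r"
      using acyclic_unique_neighbour[OF acyclic R wr(1) _ wr(2) _ wr(3)] by blast
    then show ?thesis
      using c(1) by simp
  qed (use ed in blast)
qed

lemma card_edges_not_within_nonempty: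
  assumes tree: "is_tree V Eg" and R: "R \<subseteq> V" "R \<noteq> {}" "induced_connected Eg R"
  shows "card {ed\<in>Eg. \<not> ed \<subseteq> R} \<le> card (V - R)"
proof -
  have graph: "simple_graph V Eg" and acyclic: "\<not> has_cycle V Eg" and conn: "induced_connected Eg V"
    using tree unfolding is_tree_def by auto
  have finV: "finite V"
    using graph unfolding simple_graph_def by blast
  show ?thesis
    using finV conn R(1,2) R(3)
  proof (induction R rule: connected_grow_induct)
    case complete
    have "{ed\<in>Eg. \<not> ed \<subseteq> V} = {}"
      using simple_graph_edgeE[OF graph] by blast
    then show ?case
      by (simp only: card.empty le0)
  next
    case (grow R w r)
    have "card {ed\<in>Eg. \<not> ed \<subseteq> R} \<le> card (insert {w, r} {ed\<in>Eg. \<not> ed \<subseteq> insert w R})"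
      using edges_not_within_insert[OF graph acyclic grow(1,6,2,3,4)] simple_graph_finite_edges[OF graph]
      by (intro card_mono) auto
    also have "\<dots> \<le> Suc (card {ed\<in>Eg. \<not> ed \<subseteq> insert w R})"
      using simple_graph_finite_edges[OF graph] by (simp add: card_insert_if)
    also have "\<dots> \<le> Suc (card (V - insert w R))"
      using grow(5) induced_connected_insert[OF grow(6,3,4)] by simp
    also have "\<dots> = card (V - R)"
      using card_Suc_Diff1[of "V - R" w] grow(2) finV by (metis Diff_insert finite_Diff)
    finally show ?case .
  qed
qed

lemma card_tree_edges_less:
  assumes tree: "is_tree V Eg"
  shows "card Eg < card V"
proof -
  have graph: "simple_graph V Eg" and "V \<noteq> {}"
    using tree unfolding is_tree_def by auto
  then obtain v where v: "v \<in> V"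
    by blast
  have finV: "finite V"
    using graph unfolding simple_graph_def by simp
  have "{ed\<in>Eg. \<not> ed \<subseteq> {v}} = Eg"
    by (rule simple_graph_edges_not_within_singleton[OF graph])
  moreover have "induced_connected Eg {v}"
    unfolding induced_connected_def by simp
  ultimately have "card Eg \<le> card (V - {v})"
    using card_edges_not_within_nonempty[OF tree, of "{v}"] v by simp
  then show ?thesis
    using card_Diff1_less[OF finV v] by linarith
qed

lemma card_edges_not_within:
  assumes tree: "is_tree V Eg" and R: "R \<subseteq> V" "induced_connected Eg R"
  shows "card {ed\<in>Eg. \<not> ed \<subseteq> R} \<le> card (V - R)"
proof (cases "R = {}")
  case True
  have "simple_graph V Eg"
    using tree unfolding is_tree_def by blast
  then have "card {ed\<in>Eg. \<not> ed \<subseteq> R} \<le> card Eg"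
    by (intro card_mono simple_graph_finite_edges) auto
  then show ?thesis
    using card_tree_edges_less[OF tree] True by simp
qed (use card_edges_not_within_nonempty[OF tree] R in blast)

lemma parent_edge_map:
  assumes "finite V" "induced_connected Eg V" "R \<subseteq> V" "R \<noteq> {}"
  shows "\<exists>p. inj_on p (V - R) \<and> (\<forall>w\<in>V - R. p w \<in> Eg \<and> w \<in> p w)"
  using assms
proof (induction R rule: connected_grow_induct)
  case complete
  then show ?case
    by simp
next
  case (grow R w r)
  then obtain p where p: "inj_on p (V - insert w R)" "\<forall>x\<in>V - insert w R. p x \<in> Eg \<and> x \<in> p x"
    by blast
  have "V - insert w R = V - R - {w}"
    by blast
  moreover have "{w, r} \<notin> p ` (V - insert w R)"
    using p(2) grow(2,3) by auto
  ultimately have "inj_on (p(w := {w, r})) (V - R)"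
    using p(1) by (metis inj_on_fun_upd_extend)
  moreover have "\<forall>x\<in>V - R. (p(w := {w, r})) x \<in> Eg \<and> x \<in> (p(w := {w, r})) x"
    using p(2) grow(4) by auto
  ultimately show ?case
    by blast
qed

section \<open>Contracting along a presenting tree\<close>

locale presenting_tree =
  fixes E :: "'a set" and As :: "'a set list" and e :: 'a and k :: nat
    and V :: "'v set" and Eg :: "'v set set" and \<phi> :: "'v \<Rightarrow> nat"
    and es :: "('v \<times> 'v) list"
  assumes finite_ground: "finite E"
    and sets_subset: "\<forall>A\<in>set As. A \<subseteq> E"
    and e_in_ground: "e \<in> E"
    and k_le: "k \<le> length As"
    and e_in_first: "\<forall>i<k. e \<in> As ! i"
    and e_notin_rest: "\<forall>j. k \<le> j \<and> j < length As \<longrightarrow> e \<notin> As ! j"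
    and tree: "is_tree V Eg"
    and presenting: "presenting_map E As e V Eg \<phi>"
    and edges_list: "Eg = set (map (\<lambda>(u, v). {u, v}) es)"
    and edges_distinct: "distinct (map (\<lambda>(u, v). {u, v}) es)"
begin

interpretation transversal: matroid E "partial_transversal E As"
  by (rule matroid_partial_transversal[OF finite_ground])

abbreviation edge_sets :: "'v set list" where
  "edge_sets \<equiv> map (\<lambda>(u, v). {u, v}) es"

abbreviation edge_presentation :: "'a set list" where
  "edge_presentation \<equiv> map (\<lambda>(u, v). As ! \<phi> u \<union> As ! \<phi> v - {e}) es"

definition contracted_presentation :: "'a set list" where
  "contracted_presentation = edge_presentation @ drop k As"

lemma phi_bij: "bij_betw \<phi> V {..<k}"
proof -
  have "{i. i < length As \<and> e \<in> As ! i} = {..<k}"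
    using k_le e_in_first e_notin_rest by (auto simp: not_less)
  then show ?thesis
    using presenting unfolding presenting_map_def by simp
qed

lemma phi_less: "v \<in> V \<Longrightarrow> \<phi> v < k"
  using phi_bij unfolding bij_betw_def by auto

lemma nth_subset_ground: "i < length As \<Longrightarrow> As ! i \<subseteq> E"
  using sets_subset by auto

lemma vertex_set_subset_ground: "v \<in> V \<Longrightarrow> As ! \<phi> v \<subseteq> E"
  using nth_subset_ground phi_less k_le by (meson less_le_trans)

lemma card_V: "card V = k"
  using bij_betw_same_card[OF phi_bij] by simp

lemma graph: "simple_graph V Eg"
  using tree unfolding is_tree_def by blast

lemma finite_V: "finite V"
  using graph unfolding simple_graph_def by blast

lemma length_es_less: "length es < k"
  using card_tree_edges_less[OF tree] distinct_card[OF edges_distinct] card_V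
  unfolding edges_list by simp

lemma edge_sets_bij: "bij_betw ((!) edge_sets) {..<length es} Eg"
  using edges_distinct edges_list by (intro bij_betw_nth) simp_all

lemma edge_sets_subset:
  assumes "j < length es"
  shows "edge_sets ! j \<subseteq> V"
proof -
  have "edge_sets ! j \<in> Eg"
    using bij_betw_apply[OF edge_sets_bij] assms by simp
  then show ?thesis
    by (rule simple_graph_edgeE[OF graph]) simp
qed

lemma nth_edge_presentation:
  assumes "j < length es"
  shows "edge_presentation ! j = (\<Union>w\<in>edge_sets ! j. As ! \<phi> w) - {e}"
proof (cases "es ! j")
  case (Pair u v)
  then show ?thesis
    using assms by simp
qed

lemma nth_contracted_edge:
  assumes "j < length es"
  shows "contracted_presentation ! j = (\<Union>w\<in>edge_sets ! j. As ! \<phi> w) - {e}"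
proof -
  have "contracted_presentation ! j = edge_presentation ! j"
    using assms unfolding contracted_presentation_def by (simp add: nth_append)
  also have "\<dots> = (\<Union>w\<in>edge_sets ! j. As ! \<phi> w) - {e}"
    by (rule nth_edge_presentation[OF assms])
  finally show ?thesis .
qed

lemma nth_contracted_rest:
  "i < length As - k \<Longrightarrow> contracted_presentation ! (length es + i) = As ! (k + i)"
  unfolding contracted_presentation_def using k_le by (simp add: nth_append)

lemma length_contracted: "length contracted_presentation = length es + (length As - k)"
  unfolding contracted_presentation_def by simp

lemma contracted_subset: "\<forall>A\<in>set contracted_presentation. A \<subseteq> E - {e}"
proof
  fix A assume "A \<in> set contracted_presentation"
  then obtain j where j: "j < length contracted_presentation" "A = contracted_presentation ! j"
    by (auto simp: in_set_conv_nth)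
  show "A \<subseteq> E - {e}"
  proof (cases "j < length es")
    case True
    have "As ! \<phi> w \<subseteq> E" if "w \<in> edge_sets ! j" for w
      using that edge_sets_subset[OF True] vertex_set_subset_ground by blast
    then show ?thesis
      using j(2) nth_contracted_edge[OF True] by blast
  next
    case False
    define i where "i = j - length es"
    have i: "i < length As - k" "j = length es + i"
      using False j(1) unfolding length_contracted i_def by auto
    then have "A = As ! (k + i)"
      using j(2) nth_contracted_rest by simp
    moreover have "k + i < length As"
      using i(1) by simp
    ultimately show ?thesis
      using nth_subset_ground e_notin_rest by auto
  qed
qed

(* Root the tree at the vertex with index i0 and send every other vertex to the edge joining it
   to its parent. *)
lemma parent_edge_cover:
  assumes i0: "i0 < k"
  obtains h where "inj_on h ({..<k} - {i0})"
    and "\<And>i. i \<in> {..<k} - {i0} \<Longrightarrow> h i < length es \<and> As ! i - {e} \<subseteq> contracted_presentation ! h i"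
proof -
  define \<psi> where "\<psi> = inv_into V \<phi>"
  have \<psi>: "bij_betw \<psi> {..<k} V"
    unfolding \<psi>_def by (rule bij_betw_inv_into[OF phi_bij])
  have phi_psi: "\<phi> (\<psi> i) = i" if "i < k" for i
    using that phi_bij unfolding \<psi>_def bij_betw_def by (simp add: f_inv_into_f)
  have \<psi>_Diff: "bij_betw \<psi> ({..<k} - {i0}) (V - {\<psi> i0})"
    using \<psi> i0 by (intro bij_betw_DiffI) (auto simp: bij_betw_def)
  obtain p where p: "inj_on p (V - {\<psi> i0})" "\<forall>w\<in>V - {\<psi> i0}. p w \<in> Eg \<and> w \<in> p w"
    using parent_edge_map[OF finite_V _ _, of Eg "{\<psi> i0}"] tree \<psi> i0
    unfolding is_tree_def bij_betw_def by auto
  define idx where "idx = inv_into {..<length es} ((!) edge_sets)"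
  have idx: "bij_betw idx Eg {..<length es}"
    unfolding idx_def by (rule bij_betw_inv_into[OF edge_sets_bij])
  have edge_idx: "edge_sets ! idx ed = ed" if "ed \<in> Eg" for ed
    using that edge_sets_bij unfolding idx_def bij_betw_def by (simp add: f_inv_into_f)
  define h where "h = idx \<circ> p \<circ> \<psi>"
  have "inj_on (p \<circ> \<psi>) ({..<k} - {i0})"
    using \<psi>_Diff p(1) unfolding bij_betw_def by (simp add: comp_inj_on)
  moreover have "(p \<circ> \<psi>) ` ({..<k} - {i0}) \<subseteq> Eg"
    using \<psi>_Diff p(2) unfolding bij_betw_def by auto
  ultimately have h_inj: "inj_on h ({..<k} - {i0})"
    unfolding h_def using idx unfolding bij_betw_def by (metis comp_assoc comp_inj_on inj_on_subset)
  have h_cover: "h i < length es \<and> As ! i - {e} \<subseteq> contracted_presentation ! h i"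
    if i: "i \<in> {..<k} - {i0}" for i
  proof -
    have w: "\<psi> i \<in> V - {\<psi> i0}" "\<phi> (\<psi> i) = i"
      using i \<psi>_Diff phi_psi unfolding bij_betw_def by auto
    then have "p (\<psi> i) \<in> Eg" "\<psi> i \<in> p (\<psi> i)"
      using p(2) by auto
    then have "h i < length es" "edge_sets ! h i = p (\<psi> i)"
      using idx edge_idx unfolding h_def bij_betw_def by auto
    then show ?thesis
      using nth_contracted_edge \<open>\<psi> i \<in> p (\<psi> i)\<close> w(2) by auto
  qed
  show ?thesis
    by (rule that[OF h_inj h_cover])
qed

lemma contracted_cover:
  assumes i0: "i0 < k"
  obtains F where "inj_on F ({..<length As} - {i0})"
    and "\<And>i. i \<in> {..<length As} - {i0} \<Longrightarrow>
      F i < length contracted_presentation \<and> As ! i - {e} \<subseteq> contracted_presentation ! F i"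
proof -
  obtain h where h: "inj_on h ({..<k} - {i0})"
    "\<And>i. i \<in> {..<k} - {i0} \<Longrightarrow> h i < length es \<and> As ! i - {e} \<subseteq> contracted_presentation ! h i"
    using parent_edge_cover[OF i0] by metis
  define F where "F = (\<lambda>i. if i \<in> {..<k} - {i0} then h i else length es + (i - k))"
  have "inj_on (\<lambda>i. length es + (i - k)) {k..<length As}"
    by (auto simp: inj_on_def)
  moreover have "h ` ({..<k} - {i0}) \<inter> (\<lambda>i. length es + (i - k)) ` {k..<length As} = {}"
    using h(2) by fastforce
  ultimately have "inj_on F (({..<k} - {i0}) \<union> {k..<length As})"
    unfolding F_def by (rule inj_on_disjoint_Un[OF h(1)])
  moreover have "({..<k} - {i0}) \<union> {k..<length As} = {..<length As} - {i0}"
    using i0 k_le by auto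
  moreover have "F i < length contracted_presentation \<and> As ! i - {e} \<subseteq> contracted_presentation ! F i"
    if i: "i \<in> {..<length As} - {i0}" for i
  proof (cases "i < k")
    case True
    then show ?thesis
      using h(2)[of i] i unfolding F_def length_contracted by auto
  next
    case False
    then show ?thesis
      using nth_contracted_rest[of "i - k"] i unfolding F_def length_contracted by auto
  qed
  ultimately show ?thesis
    using that by metis
qed

lemma partial_transversal_contractedI:
  assumes X: "X \<subseteq> E - {e}" and insert_e: "partial_transversal E As (insert e X)"
  shows "partial_transversal (E - {e}) contracted_presentation X"
proof -
  obtain g where g: "inj_on g (insert e X)" "\<forall>x\<in>insert e X. g x < length As \<and> x \<in> As ! g x"
    using insert_e unfolding partial_transversal_def by blast
  have "g e < k"
    using g(2) e_notin_rest by (meson insertI1 not_less)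
  then obtain F where F: "inj_on F ({..<length As} - {g e})"
    "\<And>i. i \<in> {..<length As} - {g e} \<Longrightarrow>
      F i < length contracted_presentation \<and> As ! i - {e} \<subseteq> contracted_presentation ! F i"
    using contracted_cover by metis
  have g_X: "g x \<in> {..<length As} - {g e}" if "x \<in> X" for x
  proof -
    have "x \<noteq> e"
      using that X by blast
    then show ?thesis
      using inj_onD[OF g(1), of x e] g(2) that by auto
  qed
  then have "inj_on (F \<circ> g) X"
    using g(1) F(1) by (intro comp_inj_on) (auto intro: inj_on_subset)
  moreover have "(F \<circ> g) x < length contracted_presentation \<and> x \<in> contracted_presentation ! (F \<circ> g) x"
    if "x \<in> X" for x
    using F(2)[of "g x"] g_X g(2) X that by auto
  ultimately show ?thesis
    unfolding partial_transversal_def using X by metis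
qed

(* The presenting map joins a and b inside the vertices whose sets lie in cl*(A a + A b), and
   by circuit_element_notin_dual_closure no element of Z lies there. *)
lemma untouched_vertices_connected:
  assumes Z: "circuit E (partial_transversal E As) Z"
  shows "induced_connected Eg {v\<in>V. As ! \<phi> v \<inter> Z = {}}"
  unfolding induced_connected_iff
proof (intro ballI)
  let ?R = "{v\<in>V. As ! \<phi> v \<inter> Z = {}}"
  fix a b assume ab: "a \<in> ?R" "b \<in> ?R"
  show "(a, b) \<in> (induced_edge_rel Eg ?R)\<^sup>*"
  proof (cases "a = b")
    case False
    define X where "X = As ! \<phi> a \<union> As ! \<phi> b"
    define S where "S = {u\<in>V. As ! \<phi> u \<subseteq> dual_closure E (partial_transversal E As) X}"
    have "induced_connected Eg S"
      using presenting ab False unfolding presenting_map_def S_def X_def by blast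
    moreover have X: "X \<subseteq> E" "Z \<inter> X = {}"
      using ab vertex_set_subset_ground unfolding X_def by auto
    then have "a \<in> S" "b \<in> S"
      using ab subset_dual_closure[OF X(1)] unfolding S_def X_def by auto
    moreover have "S \<subseteq> ?R"
    proof
      fix u assume u: "u \<in> S"
      have "z \<notin> As ! \<phi> u" if "z \<in> Z" for z
        using transversal.circuit_element_notin_dual_closure[OF Z that X] u unfolding S_def by blast
      then show "u \<in> ?R"
        using u unfolding S_def by blast
    qed
    ultimately show ?thesis
      using induced_edge_rel_rtrancl_mono unfolding induced_connected_iff by blast
  qed simp
qed

lemma card_nbhd_edge_presentation:
  "card (nbhd edge_presentation Z) \<le> card {ed\<in>Eg. \<not> ed \<subseteq> {v\<in>V. As ! \<phi> v \<inter> Z = {}}}"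
proof -
  have "inj_on ((!) edge_sets) (nbhd edge_presentation Z)"
    using edges_distinct by (intro inj_on_nth) (auto simp: nbhd_def)
  moreover have "(!) edge_sets ` nbhd edge_presentation Z \<subseteq> {ed\<in>Eg. \<not> ed \<subseteq> {v\<in>V. As ! \<phi> v \<inter> Z = {}}}"
  proof
    fix ed assume "ed \<in> (!) edge_sets ` nbhd edge_presentation Z"
    then obtain j where "j \<in> nbhd edge_presentation Z" and ed: "ed = edge_sets ! j"
      by blast
    then have j: "j < length es" "edge_presentation ! j \<inter> Z \<noteq> {}"
      unfolding nbhd_def by auto
    have "((\<Union>w\<in>edge_sets ! j. As ! \<phi> w) - {e}) \<inter> Z \<noteq> {}"
      using j(2) unfolding nth_edge_presentation[OF j(1)] .
    then obtain w where "w \<in> ed" "As ! \<phi> w \<inter> Z \<noteq> {}"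
      using ed by blast
    moreover have "ed \<in> Eg"
      using j(1) ed bij_betw_apply[OF edge_sets_bij] by simp
    ultimately show "ed \<in> {ed\<in>Eg. \<not> ed \<subseteq> {v\<in>V. As ! \<phi> v \<inter> Z = {}}}"
      by blast
  qed
  moreover have "finite Eg"
    using edges_list by simp
  ultimately show ?thesis
    by (simp add: card_inj_on_le)
qed

lemma card_touched_vertices:
  "card {v\<in>V. As ! \<phi> v \<inter> Z \<noteq> {}} \<le> card (nbhd (take k As) Z)"
proof (rule card_inj_on_le)
  show "inj_on \<phi> {v\<in>V. As ! \<phi> v \<inter> Z \<noteq> {}}"
    using phi_bij unfolding bij_betw_def by (auto intro: inj_on_subset)
  show "\<phi> ` {v\<in>V. As ! \<phi> v \<inter> Z \<noteq> {}} \<subseteq> nbhd (take k As) Z"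
    using phi_less k_le unfolding nbhd_def by auto
qed simp

lemma card_nbhd_split: "card (nbhd As Z) = card (nbhd (take k As) Z) + card (nbhd (drop k As) Z)"
  using card_nbhd_append[of "take k As" "drop k As" Z] by simp

lemma card_nbhd_contracted:
  "card (nbhd contracted_presentation Z) = card (nbhd edge_presentation Z) + card (nbhd (drop k As) Z)"
  unfolding contracted_presentation_def by (rule card_nbhd_append)

lemma partial_transversal_contracted_indep:
  assumes X: "partial_transversal (E - {e}) contracted_presentation X"
  shows "partial_transversal E As X"
proof (rule ccontr)
  assume dependent: "\<not> partial_transversal E As X"
  have "X \<subseteq> E"
    using X unfolding partial_transversal_def by blast
  then obtain Z where "Z \<subseteq> X" and Z: "circuit E (partial_transversal E As) Z"
    using dependent by (rule transversal.dependent_contains_circuit)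
  let ?R = "{v\<in>V. As ! \<phi> v \<inter> Z = {}}"
  have "card {ed\<in>Eg. \<not> ed \<subseteq> ?R} \<le> card (V - ?R)"
    using untouched_vertices_connected[OF Z] by (intro card_edges_not_within[OF tree]) auto
  also have "V - ?R = {v\<in>V. As ! \<phi> v \<inter> Z \<noteq> {}}"
    by blast
  finally have "card {ed\<in>Eg. \<not> ed \<subseteq> ?R} \<le> card {v\<in>V. As ! \<phi> v \<inter> Z \<noteq> {}}" .
  then have "card (nbhd contracted_presentation Z) \<le> card (nbhd As Z)"
    using card_nbhd_contracted[of Z] card_nbhd_split[of Z] card_nbhd_edge_presentation[of Z]
      card_touched_vertices[of Z] by linarith
  moreover have "card Z \<le> card (nbhd contracted_presentation Z)"
    using card_le_card_nbhd[OF X \<open>Z \<subseteq> X\<close>] .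
  ultimately show False
    using circuit_nbhd_deficient[OF finite_ground Z] by linarith
qed

lemma card_nbhd_first_sets:
  assumes "e \<in> Z"
  shows "card (nbhd (take k As) Z) = k"
proof -
  have "As ! i \<inter> Z \<noteq> {}" if "i < k" for i
    using that e_in_first assms by blast
  then have "nbhd (take k As) Z = {..<k}"
    using k_le unfolding nbhd_def by auto
  then show ?thesis
    by simp
qed

lemma partial_transversal_contractedD:
  assumes X: "partial_transversal (E - {e}) contracted_presentation X"
  shows "partial_transversal E As (insert e X)"
proof (rule ccontr)
  assume dependent: "\<not> partial_transversal E As (insert e X)"
  have fin: "finite (insert e X)" and "insert e X \<subseteq> E"
    using X e_in_ground partial_transversal_finite unfolding partial_transversal_def by auto
  then have "\<not> (\<forall>Y\<subseteq>insert e X. card Y \<le> card (nbhd As Y))"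
    using dependent partial_transversal_iff_Hall[OF fin] by blast
  then obtain Z where Z: "Z \<subseteq> insert e X" "card (nbhd As Z) < card Z"
    by (auto simp: not_le)
  have "e \<in> Z"
  proof (rule ccontr)
    assume "e \<notin> Z"
    then have "card Z \<le> card (nbhd As Z)"
      using Z(1) by (intro card_le_card_nbhd[OF partial_transversal_contracted_indep[OF X]]) blast
    then show False
      using Z(2) by simp
  qed
  define Y where "Y = Z - {e}"
  have "Y \<subseteq> X"
    using Z(1) unfolding Y_def by blast
  have "card Z = Suc (card Y)"
    using card_Suc_Diff1[OF finite_subset[OF Z(1) fin] \<open>e \<in> Z\<close>] unfolding Y_def by simp
  have "card (nbhd edge_presentation Y) \<le> length es"
    using card_nbhd_le_length[of edge_presentation Y] by simp
  moreover have "card (nbhd (drop k As) Y) \<le> card (nbhd (drop k As) Z)"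
    unfolding Y_def by (intro card_mono finite_nbhd nbhd_mono) blast
  moreover have "card Y \<le> card (nbhd contracted_presentation Y)"
    using card_le_card_nbhd[OF X \<open>Y \<subseteq> X\<close>] .
  ultimately show False
    using Z(2) \<open>card Z = Suc (card Y)\<close> card_nbhd_contracted[of Y] card_nbhd_split[of Z]
      card_nbhd_first_sets[OF \<open>e \<in> Z\<close>] length_es_less by linarith
qed

lemma partial_transversal_singleton_e: "partial_transversal E As {e}"
proof -
  have "0 < k"
    using card_V tree finite_V unfolding is_tree_def by (auto simp: card_gt_0_iff)
  then show ?thesis
    unfolding partial_transversal_def using e_in_ground e_in_first k_le
    by (intro conjI exI[of _ "\<lambda>_. 0"]) auto
qed

lemma is_presentation_contraction:
  assumes "is_presentation E indep As"
  shows "is_presentation (E - {e}) (contract_indep E indep e) contracted_presentation"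
proof -
  have indep: "indep = partial_transversal E As"
    using assms unfolding is_presentation_def by auto
  have "contract_indep E indep e X \<longleftrightarrow> partial_transversal (E - {e}) contracted_presentation X" for X
  proof
    assume "contract_indep E indep e X"
    then have "X \<subseteq> E - {e}" "partial_transversal E As (insert e X)"
      using partial_transversal_singleton_e unfolding contract_indep_def indep by auto
    then show "partial_transversal (E - {e}) contracted_presentation X"
      by (rule partial_transversal_contractedI)
  next
    assume X: "partial_transversal (E - {e}) contracted_presentation X"
    then have "X \<subseteq> E - {e}"
      unfolding partial_transversal_def by blast
    then show "contract_indep E indep e X"
      using partial_transversal_contractedD[OF X] partial_transversal_singleton_e
      unfolding contract_indep_def indep by simp
  qed
  then show ?thesis
    unfolding is_presentation_def using contracted_subset by blast
qed

end

theorem theorem1p2: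
  fixes E :: "'a set" and indep :: "'a set \<Rightarrow> bool" and As :: "'a set list"
    and e :: 'a and k :: nat
    and V :: "'v set" and Eg :: "'v set set" and \<phi> :: "'v \<Rightarrow> nat"
    and es :: "('v \<times> 'v) list"
  assumes "finite E"
    and pres: "is_presentation E indep As"
    and rk: "length As = mrank indep E"
    and "e \<in> E"
    and "k \<le> length As"
    and "\<forall>i<k. e \<in> As ! i"
    and "\<forall>j. k \<le> j \<and> j < length As \<longrightarrow> e \<notin> As ! j"
    and "minimal_presenting_graph E As e V Eg"
    and "is_tree V Eg"
    and "presenting_map E As e V Eg \<phi>"
    and "Eg = set (map (\<lambda>(u, v). {u, v}) es)"
    and "distinct (map (\<lambda>(u, v). {u, v}) es)"
  shows "is_presentation (E - {e}) (contract_indep E indep e)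
           (map (\<lambda>(u, v). As ! \<phi> u \<union> As ! \<phi> v - {e}) es @ drop k As)"
proof -
  interpret presenting_tree E As e k V Eg \<phi> es
    using assms by unfold_locales (simp_all add: is_presentation_def)
  show ?thesis
    using is_presentation_contraction[OF pres] unfolding contracted_presentation_def .
qed

end
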